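(* Let $(Z_t)_{t\in\mathbb Z}$ be independent random variables with values in $[0,B]$, let $\mathcal F_n=\sigma(Z_t:t\le n)$ and $\mathcal F=(\mathcal F_n)_{n\in\mathbb Z}$. Fix $s\in\mathbb N$, $n_0\in\mathbb Z$ and $T\ge n_0$. For $n\ge n_0$ let $S_n=\sum_{t=n_0}^n B_t(Z_t-\mathbb E[Z_t])$ and $t_n=\sum_{t=n_0}^n B_t$, where each $B_t\in\{0,1\}$ is $\mathcal F_{t-1}$-measurable. Let $\phi\in\{n_0,\dots,T+1\}$ be an $\mathcal F$-stopping time such that either $t_\phi\ge s$ or $\phi=T+1$. Then for every $\delta>0$, $$\mathbb P[S_\phi\ge t_\phi\delta,\ \phi\le T]\le \exp(-2s\delta^2B^{-2}),\qquad \mathbb P[|S_\phi|\ge t_\phi\delta,\ \phi\le T]\le 2\exp(-2s\delta^2B^{-2}).$$ *)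

theory Defs
  imports "HOL-Probability.Probability"
begin

definition nat_filt :: "'a measure \<Rightarrow> (int \<Rightarrow> 'a \<Rightarrow> real) \<Rightarrow> int \<Rightarrow> 'a measure" where
  "nat_filt M Z n = sigma (space M) {Z t -` A \<inter> space M | t A. t \<le> n \<and> A \<in> sets borel}"

end

theory Submission
  imports Defs
begin

text \<open>
  With a predictable selection \<open>b\<^sub>t \<in> {0,1}\<close> stopped at \<open>\<phi>\<close>,
  gates \<open>G\<^sub>t = b\<^sub>t [t \<le> \<phi>]\<close> are again predictable, and for any real \<open>l\<close> the process
  \<open>W\<^sub>n = exp (\<Sum>\<^sub>t\<^sub>\<le>\<^sub>n G\<^sub>t (l (Z\<^sub>t - E Z\<^sub>t) - l\<^sup>2B\<^sup>2/8))\<close> is a supermartingale, because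
  \<open>Z\<^sub>t\<close> is independent of the past \<open>\<F>\<^sub>t\<^sub>-\<^sub>1\<close> and Hoeffding's lemma bounds its exponential moment.
  Hence \<open>E W\<^sub>T \<le> 1\<close>.  On the event \<open>\<plusminus>S\<^sub>\<phi> \<ge> \<delta> t\<^sub>\<phi>, \<phi> \<le> T\<close> we have \<open>t\<^sub>\<phi> \<ge> s\<close>, and the choice
  \<open>l = \<plusminus>4\<delta>/B\<^sup>2\<close> gives \<open>W\<^sub>T \<ge> exp (2s\<delta>\<^sup>2/B\<^sup>2)\<close>, so Markov's inequality yields the one-sided
  bound; a union bound over both signs gives the two-sided one.
\<close>

lemma (in prob_space) indep_set_mono:
  assumes "indep_set A B" "A' \<subseteq> A" "B' \<subseteq> B"
  shows "indep_set A' B'"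
  using assms unfolding indep_sets2_eq by blast

locale indep_process = prob_space M for M :: "'a measure" +
  fixes Z :: "int \<Rightarrow> 'a \<Rightarrow> real"
  assumes indep_Z: "indep_vars (\<lambda>_. borel) Z UNIV"
begin

lemma measurable_Z [measurable]: "Z t \<in> borel_measurable M"
  using indep_Z unfolding indep_vars_def by auto

lemma space_nat_filt [simp]: "space (nat_filt M Z n) = space M"
  unfolding nat_filt_def by (simp add: space_measure_of_conv)

lemma sets_nat_filt:
  "sets (nat_filt M Z n) = sigma_sets (space M) {Z t -` A \<inter> space M | t A. t \<le> n \<and> A \<in> sets borel}"
  unfolding nat_filt_def by (intro sets_measure_of) auto

lemma nat_filt_subset_events: "sets (nat_filt M Z n) \<subseteq> events"
  unfolding sets_nat_filt by (intro sets.sigma_sets_subset) auto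

lemma nat_filt_mono: "m \<le> n \<Longrightarrow> sets (nat_filt M Z m) \<subseteq> sets (nat_filt M Z n)"
  unfolding sets_nat_filt by (intro sigma_sets_subseteq) fastforce

lemma measurable_Z_nat_filt: "t \<le> n \<Longrightarrow> Z t \<in> borel_measurable (nat_filt M Z n)"
  unfolding measurable_def sets_nat_filt by (auto intro!: sigma_sets.Basic)

lemma measurable_nat_filt_mono:
  "f \<in> measurable (nat_filt M Z m) N \<Longrightarrow> m \<le> n \<Longrightarrow> f \<in> measurable (nat_filt M Z n) N"
  using measurable_mono[of N N "nat_filt M Z m" "nat_filt M Z n"] nat_filt_mono by auto

lemma measurable_nat_filt_events: "f \<in> measurable (nat_filt M Z n) N \<Longrightarrow> f \<in> measurable M N"
  using measurable_mono[of N N "nat_filt M Z n" M] nat_filt_subset_events by auto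

text \<open>The past \<open>\<F>\<^sub>n\<^sub>-\<^sub>1\<close> is independent of \<open>\<sigma>(Z\<^sub>n)\<close>: group the independent generators
  \<open>\<sigma>(Z\<^sub>t)\<close> into the disjoint index blocks \<open>{..n-1}\<close> and \<open>{n}\<close>.\<close>
lemma indep_past_present:
  "indep_set (sets (nat_filt M Z (n - 1))) (sigma_sets (space M) {Z n -` A \<inter> space M | A. A \<in> sets borel})"
proof -
  define E where "E i = {Z i -` A \<inter> space M | A. A \<in> sets borel}" for i
  define I where "I j = (if j then {..n - 1} else {n})" for j
  have "indep_sets (\<lambda>i. sigma_sets (space M) (E i)) UNIV"
    using indep_Z unfolding indep_vars_def E_def by auto
  then have "indep_sets E UNIV"
    by (rule indep_sets_mono_sets) (auto intro: sigma_sets.Basic)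
  then have "indep_sets E (\<Union>j. I j)"
    by (rule indep_sets_mono_index[rotated]) simp
  then have collect: "indep_sets (\<lambda>j. sigma_sets (space M) (\<Union>i\<in>I j. E i)) UNIV"
  proof (rule indep_sets_collect_sigma)
    show "Int_stable (E i)" for i
      unfolding E_def Int_stable_def by clarify (rule_tac x="A \<inter> Aa" in exI, auto)
    show "disjoint_family_on I UNIV"
      unfolding disjoint_family_on_def I_def by auto
  qed
  have past: "(\<Union>i\<in>I True. E i) = {Z t -` A \<inter> space M | t A. t \<le> n - 1 \<and> A \<in> sets borel}"
    unfolding I_def E_def by auto force+
  have present: "(\<Union>i\<in>I False. E i) = {Z n -` A \<inter> space M | A. A \<in> sets borel}"
    unfolding I_def E_def by auto
  show ?thesis
    unfolding indep_set_def sets_nat_filt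
    by (rule indep_sets_mono_sets[OF collect]) (simp split: bool.split add: past present)
qed

lemma indep_var_past_present:
  assumes X: "X \<in> borel_measurable (nat_filt M Z (n - 1))" and g: "g \<in> borel_measurable borel"
  shows "indep_var borel X borel (\<lambda>\<omega>. g (Z n \<omega>))"
  unfolding indep_var_eq
proof (intro conjI)
  show "random_variable borel X" using measurable_nat_filt_events[OF X] by simp
  show "random_variable borel (\<lambda>\<omega>. g (Z n \<omega>))" using g by measurable
  have "sigma_sets (space M) {X -` A \<inter> space M | A. A \<in> sets borel} \<subseteq> sets (nat_filt M Z (n - 1))"
    using measurable_sets[OF X] sets.top[of "nat_filt M Z (n - 1)"]
    by (intro sets.sigma_sets_subset') auto
  moreover have "sigma_sets (space M) {(\<lambda>\<omega>. g (Z n \<omega>)) -` A \<inter> space M | A. A \<in> sets borel}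
      \<subseteq> sigma_sets (space M) {Z n -` A \<inter> space M | A. A \<in> sets borel}"
  proof (intro sigma_sets_subseteq subsetI)
    fix x assume "x \<in> {(\<lambda>\<omega>. g (Z n \<omega>)) -` A \<inter> space M | A. A \<in> sets borel}"
    then obtain A where "A \<in> sets borel" "x = Z n -` (g -` A) \<inter> space M" by auto
    then show "x \<in> {Z n -` A \<inter> space M | A. A \<in> sets borel}"
      using measurable_sets[OF g] by auto
  qed
  ultimately show "indep_set (sigma_sets (space M) {X -` A \<inter> space M | A. A \<in> sets borel})
      (sigma_sets (space M) {(\<lambda>\<omega>. g (Z n \<omega>)) -` A \<inter> space M | A. A \<in> sets borel})"
    by (rule indep_set_mono[OF indep_past_present])
qed

end

lemma (in interval_bounded_random_variable) Hoeffdings_lemma_expectation_pos: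
  assumes "l > 0"
  shows "expectation (\<lambda>x. exp (l * (f x - expectation f))) \<le> exp (l\<^sup>2 * (b - a)\<^sup>2 / 8)"
proof -
  have "expectation (\<lambda>x. exp (l * (f x - expectation f)))
      = enn2real (\<integral>\<^sup>+ x. ennreal (exp (l * (f x - expectation f))) \<partial>M)"
    by (intro integral_eq_nn_integral) auto
  also have "\<dots> \<le> exp (l\<^sup>2 * (b - a)\<^sup>2 / 8)"
    using Hoeffdings_lemma_nn_integral[OF assms] by (intro enn2real_leI) auto
  finally show ?thesis .
qed

text \<open>Hoeffding's lemma for the centred moment generating function, for every real \<open>l\<close>;
  the library states it for \<open>l > 0\<close> only, and negative \<open>l\<close> is reduced to it via \<open>-f\<close>.\<close>
lemma (in interval_bounded_random_variable) Hoeffdings_lemma_expectation: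
  "expectation (\<lambda>x. exp (l * (f x - expectation f))) \<le> exp (l\<^sup>2 * (b - a)\<^sup>2 / 8)"
proof (cases l "0 :: real" rule: linorder_cases)
  case less
  interpret neg: interval_bounded_random_variable M "\<lambda>x. - f x" "- b" "- a"
    by unfold_locales (auto intro: eventually_mono[OF AE_in_interval])
  have "expectation (\<lambda>x. exp ((- l) * (- f x - expectation (\<lambda>x. - f x))))
      \<le> exp ((- l)\<^sup>2 * (- a - - b)\<^sup>2 / 8)"
    using less by (intro neg.Hoeffdings_lemma_expectation_pos) simp
  then show ?thesis by (simp add: algebra_simps)
next
  case equal
  then show ?thesis by (simp add: prob_space)
next
  case greater
  then show ?thesis by (rule Hoeffdings_lemma_expectation_pos)
qed

lemma exp_gated: "G \<in> {0, 1} \<Longrightarrow> exp (G * x) = 1 - G + G * exp (x :: real)"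
  by auto

lemma (in prob_space) gated_factor_expectation_le:
  fixes W G Y :: "'a \<Rightarrow> real"
  assumes W: "integrable M W" "\<And>\<omega>. \<omega> \<in> space M \<Longrightarrow> 0 \<le> W \<omega>"
    and G: "G \<in> borel_measurable M" "\<And>\<omega>. \<omega> \<in> space M \<Longrightarrow> G \<omega> \<in> {0, 1}"
    and Y: "integrable M Y" "expectation Y \<le> 1"
    and indep: "indep_var borel (\<lambda>\<omega>. W \<omega> * G \<omega>) borel Y"
  shows "integrable M (\<lambda>\<omega>. W \<omega> * (1 - G \<omega> + G \<omega> * Y \<omega>))
    \<and> expectation (\<lambda>\<omega>. W \<omega> * (1 - G \<omega> + G \<omega> * Y \<omega>)) \<le> expectation W"
proof
  have WG: "integrable M (\<lambda>\<omega>. W \<omega> * G \<omega>)"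
  proof (rule Bochner_Integration.integrable_bound[OF W(1)])
    show "(\<lambda>\<omega>. W \<omega> * G \<omega>) \<in> borel_measurable M" using W(1) G(1) by measurable
    show "AE \<omega> in M. norm (W \<omega> * G \<omega>) \<le> norm (W \<omega>)"
      by (intro AE_I2) (auto simp: abs_mult dest!: G(2))
  qed
  have WGY: "integrable M (\<lambda>\<omega>. W \<omega> * G \<omega> * Y \<omega>)"
    by (rule indep_var_integrable[OF indep WG Y(1)])
  have split: "W \<omega> * (1 - G \<omega> + G \<omega> * Y \<omega>) = W \<omega> - W \<omega> * G \<omega> + W \<omega> * G \<omega> * Y \<omega>" for \<omega>
    by (simp add: algebra_simps)
  show "integrable M (\<lambda>\<omega>. W \<omega> * (1 - G \<omega> + G \<omega> * Y \<omega>))"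
    unfolding split using W(1) WG WGY by auto
  have "expectation (\<lambda>\<omega>. W \<omega> * (1 - G \<omega> + G \<omega> * Y \<omega>))
      = expectation W - expectation (\<lambda>\<omega>. W \<omega> * G \<omega>) + expectation (\<lambda>\<omega>. W \<omega> * G \<omega>) * expectation Y"
    unfolding split using W(1) WG WGY indep_var_lebesgue_integral[OF indep WG Y(1)] by simp
  also have "\<dots> \<le> expectation W"
  proof -
    have "0 \<le> expectation (\<lambda>\<omega>. W \<omega> * G \<omega>)"
      using W(2) G(2) by (intro integral_nonneg_AE AE_I2) fastforce
    then show ?thesis using Y(2) by (simp add: mult_left_le)
  qed
  finally show "expectation (\<lambda>\<omega>. W \<omega> * (1 - G \<omega> + G \<omega> * Y \<omega>)) \<le> expectation W" .
qed

context indep_process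
begin

lemma gated_exp_sum_expectation_le_1:
  fixes G :: "int \<Rightarrow> 'a \<Rightarrow> real" and g :: "int \<Rightarrow> real \<Rightarrow> real"
  assumes G01: "\<And>t \<omega>. \<omega> \<in> space M \<Longrightarrow> G t \<omega> \<in> {0, 1}"
    and G_pred: "\<And>t. G t \<in> borel_measurable (nat_filt M Z (t - 1))"
    and g_meas: "\<And>t. g t \<in> borel_measurable borel"
    and g_int: "\<And>t. integrable M (\<lambda>\<omega>. exp (g t (Z t \<omega>)))"
    and g_mgf: "\<And>t. expectation (\<lambda>\<omega>. exp (g t (Z t \<omega>))) \<le> 1"
  shows "integrable M (\<lambda>\<omega>. exp (\<Sum>t=n0..n. G t \<omega> * g t (Z t \<omega>)))
    \<and> expectation (\<lambda>\<omega>. exp (\<Sum>t=n0..n. G t \<omega> * g t (Z t \<omega>))) \<le> 1"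
proof -
  define W where "W n \<omega> = exp (\<Sum>t=n0..n. G t \<omega> * g t (Z t \<omega>))" for n \<omega>
  have W_adapted: "W n \<in> borel_measurable (nat_filt M Z n)" for n
  proof -
    have "(\<lambda>\<omega>. G t \<omega> * g t (Z t \<omega>)) \<in> borel_measurable (nat_filt M Z n)" if "t \<le> n" for t
    proof -
      note [measurable] = measurable_Z_nat_filt[OF that] g_meas
      have [measurable]: "G t \<in> borel_measurable (nat_filt M Z n)"
        using measurable_nat_filt_mono[OF G_pred, of t n] that by simp
      show ?thesis by measurable
    qed
    then have [measurable]: "(\<lambda>\<omega>. \<Sum>t=n0..n. G t \<omega> * g t (Z t \<omega>)) \<in> borel_measurable (nat_filt M Z n)"
      by (intro borel_measurable_sum) auto
    show ?thesis unfolding W_def by measurable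
  qed
  have W_empty: "W n = (\<lambda>_. 1)" if "n < n0" for n
    using that by (simp add: W_def fun_eq_iff)
  have W_succ: "W (n + 1) \<omega> = W n \<omega> * (1 - G (n + 1) \<omega> + G (n + 1) \<omega> * exp (g (n + 1) (Z (n + 1) \<omega>)))"
    if "n0 - 1 \<le> n" "\<omega> \<in> space M" for n \<omega>
  proof -
    have "{n0..n + 1} = insert (n + 1) {n0..n}" "n + 1 \<notin> {n0..n}" using that(1) by auto
    then show ?thesis unfolding W_def by (simp add: exp_add exp_gated[OF G01[OF that(2)]])
  qed
  have "integrable M (W n) \<and> expectation (W n) \<le> 1" if "n0 - 1 \<le> n" for n
    using that
  proof (induction n rule: int_ge_induct)
    case base
    then show ?case by (simp add: W_empty prob_space)
  next
    case (step n)
    have "integrable M (\<lambda>\<omega>. W n \<omega> * (1 - G (n + 1) \<omega> + G (n + 1) \<omega> * exp (g (n + 1) (Z (n + 1) \<omega>))))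
        \<and> expectation (\<lambda>\<omega>. W n \<omega> * (1 - G (n + 1) \<omega> + G (n + 1) \<omega> * exp (g (n + 1) (Z (n + 1) \<omega>))))
          \<le> expectation (W n)"
    proof (rule gated_factor_expectation_le)
      have "(\<lambda>\<omega>. W n \<omega> * G (n + 1) \<omega>) \<in> borel_measurable (nat_filt M Z (n + 1 - 1))"
        using W_adapted[of n] G_pred[of "n + 1"] by simp
      then show "indep_var borel (\<lambda>\<omega>. W n \<omega> * G (n + 1) \<omega>) borel (\<lambda>\<omega>. exp (g (n + 1) (Z (n + 1) \<omega>)))"
        using g_meas by (intro indep_var_past_present) auto
      show "G (n + 1) \<in> borel_measurable M"
        by (rule measurable_nat_filt_events[OF G_pred])
    qed (use step G01 g_int g_mgf in \<open>auto simp: W_def\<close>)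
    moreover have "integrable M (W (n + 1)) =
        integrable M (\<lambda>\<omega>. W n \<omega> * (1 - G (n + 1) \<omega> + G (n + 1) \<omega> * exp (g (n + 1) (Z (n + 1) \<omega>))))"
      "expectation (W (n + 1)) =
        expectation (\<lambda>\<omega>. W n \<omega> * (1 - G (n + 1) \<omega> + G (n + 1) \<omega> * exp (g (n + 1) (Z (n + 1) \<omega>))))"
      using W_succ[OF step(1)]
      by (intro Bochner_Integration.integrable_cong Bochner_Integration.integral_cong refl; simp)+
    ultimately show ?case using step(2) by auto
  qed
  then show ?thesis
    unfolding W_def[symmetric] by (cases "n0 - 1 \<le> n") (auto simp: W_empty prob_space)
qed

end

lemma (in interval_bounded_random_variable) integrable_exp_centred:
  "integrable M (\<lambda>x. exp (l * (f x - expectation f)))"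
proof (rule integrable_const_bound)
  show "AE x in M. norm (exp (l * (f x - expectation f))) \<le> exp (\<bar>l\<bar> * (\<bar>a\<bar> + \<bar>b\<bar> + \<bar>expectation f\<bar>))"
  proof (rule eventually_mono[OF AE_in_interval])
    fix x assume "f x \<in> {a..b}"
    then have dev: "\<bar>f x - expectation f\<bar> \<le> \<bar>a\<bar> + \<bar>b\<bar> + \<bar>expectation f\<bar>" by auto
    have "l * (f x - expectation f) \<le> \<bar>l\<bar> * \<bar>f x - expectation f\<bar>"
      using abs_ge_self[of "l * (f x - expectation f)"] by (simp add: abs_mult)
    also have "\<dots> \<le> \<bar>l\<bar> * (\<bar>a\<bar> + \<bar>b\<bar> + \<bar>expectation f\<bar>)"
      using dev by (rule mult_left_mono) simp
    finally show "norm (exp (l * (f x - expectation f))) \<le> exp (\<bar>l\<bar> * (\<bar>a\<bar> + \<bar>b\<bar> + \<bar>expectation f\<bar>))"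
      by simp
  qed
qed measurable

text \<open>Pointwise heart of the tail bound: on the deviation event the exponent
  \<open>l S - c N\<close> of the supermartingale, with \<open>l = \<sigma> 4\<delta>/B\<^sup>2\<close> and \<open>c = 2\<delta>\<^sup>2/B\<^sup>2\<close>, exceeds \<open>2 s \<delta>\<^sup>2/B\<^sup>2\<close>.\<close>
lemma deviation_exponent_lower_bound:
  fixes \<sigma> S N \<delta> Bd :: real
  assumes dev: "\<sigma> * S \<ge> N * \<delta>" and N: "N \<ge> real s" and \<delta>: "\<delta> > 0" and Bd: "Bd \<noteq> 0"
  shows "(\<sigma> * (4 * \<delta> / Bd\<^sup>2)) * S - (2 * \<delta>\<^sup>2 / Bd\<^sup>2) * N \<ge> 2 * real s * \<delta>\<^sup>2 / Bd\<^sup>2"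
proof -
  have Bd2: "Bd\<^sup>2 > 0" using Bd by simp
  have "(\<sigma> * (4 * \<delta> / Bd\<^sup>2)) * S - (2 * \<delta>\<^sup>2 / Bd\<^sup>2) * N
      = (4 * \<delta> / Bd\<^sup>2) * (\<sigma> * S) - (2 * \<delta>\<^sup>2 / Bd\<^sup>2) * N" by simp
  also have "\<dots> \<ge> (4 * \<delta> / Bd\<^sup>2) * (N * \<delta>) - (2 * \<delta>\<^sup>2 / Bd\<^sup>2) * N"
    using dev \<delta> Bd2 by (intro diff_right_mono mult_left_mono) auto
  also have "(4 * \<delta> / Bd\<^sup>2) * (N * \<delta>) - (2 * \<delta>\<^sup>2 / Bd\<^sup>2) * N = (2 * \<delta>\<^sup>2 / Bd\<^sup>2) * N"
    by (simp add: field_simps power2_eq_square)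
  also have "(2 * \<delta>\<^sup>2 / Bd\<^sup>2) * N \<ge> (2 * \<delta>\<^sup>2 / Bd\<^sup>2) * real s"
    using N Bd2 by (intro mult_left_mono) auto
  finally show ?thesis by (simp add: mult_ac)
qed

lemma stopped_sum_as_gated_sum:
  fixes b h :: "int \<Rightarrow> real"
  assumes "m \<le> T"
  shows "(\<Sum>t=n0..m. b t * h t) = (\<Sum>t=n0..T. (if t \<le> m then b t else 0) * h t)"
proof -
  have "(\<Sum>t=n0..T. (if t \<le> m then b t else 0) * h t) = (\<Sum>t\<in>{t\<in>{n0..T}. t \<le> m}. b t * h t)"
    by (subst sum.inter_filter) (auto intro: sum.cong)
  also have "{t\<in>{n0..T}. t \<le> m} = {n0..m}" using assms by auto
  finally show ?thesis ..
qed

lemmas stopped_count_as_gated_sum = stopped_sum_as_gated_sum[where h = "\<lambda>_. 1", simplified]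

context indep_process
begin

definition deviation_event ::
    "real \<Rightarrow> (int \<Rightarrow> 'a \<Rightarrow> real) \<Rightarrow> ('a \<Rightarrow> int) \<Rightarrow> int \<Rightarrow> int \<Rightarrow> real \<Rightarrow> 'a set" where
  "deviation_event \<sigma> b \<phi> n0 T \<delta> = {\<omega> \<in> space M.
     \<sigma> * (\<Sum>t=n0..\<phi> \<omega>. b t \<omega> * (Z t \<omega> - expectation (Z t))) \<ge> (\<Sum>t=n0..\<phi> \<omega>. b t \<omega>) * \<delta>
     \<and> \<phi> \<omega> \<le> T}"

text \<open>Stopping a predictable process at a stopping time keeps it predictable:
  \<open>t \<le> \<phi>\<close> is the event \<open>\<phi> > t - 1\<close>, which lies in \<open>\<F>\<^sub>t\<^sub>-\<^sub>1\<close>.\<close>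
lemma stopped_gate_predictable:
  assumes stop: "stopping_time (nat_filt M Z) \<phi>"
    and b_pred: "b t \<in> borel_measurable (nat_filt M Z (t - 1))"
  shows "(\<lambda>\<omega>. if t \<le> \<phi> \<omega> then b t \<omega> else 0) \<in> borel_measurable (nat_filt M Z (t - 1))"
proof -
  have [measurable]: "Measurable.pred (nat_filt M Z (t - 1)) (\<lambda>\<omega>. t \<le> \<phi> \<omega>)"
  proof -
    have "(\<lambda>\<omega>. t \<le> \<phi> \<omega>) = (\<lambda>\<omega>. t - 1 < \<phi> \<omega>)" by auto
    then show ?thesis using stopping_timeD2[OF stop, of "t - 1"] by simp
  qed
  show ?thesis using b_pred by measurable
qed

text \<open>The deviation event is measurable: before \<open>T+1\<close> both stopped sums are sums up to \<open>T\<close>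
  of products with the measurable gates \<open>b\<^sub>t [t \<le> \<phi>]\<close>.\<close>
lemma deviation_event_sets:
  assumes stop: "stopping_time (nat_filt M Z) \<phi>"
    and b_pred: "\<And>t. b t \<in> borel_measurable (nat_filt M Z (t - 1))"
  shows "deviation_event \<sigma> b \<phi> n0 T \<delta> \<in> events"
proof -
  define G where "G t \<omega> = (if t \<le> \<phi> \<omega> then b t \<omega> else 0)" for t \<omega>
  have [measurable]: "G t \<in> borel_measurable M" for t
    unfolding G_def by (rule measurable_nat_filt_events[OF stopped_gate_predictable[OF stop b_pred]])
  have [measurable]: "Measurable.pred M (\<lambda>\<omega>. \<phi> \<omega> \<le> T)"
    by (rule measurable_nat_filt_events[OF stopping_timeD[OF stop]])
  have "deviation_event \<sigma> b \<phi> n0 T \<delta> = {\<omega> \<in> space M.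
      \<sigma> * (\<Sum>t=n0..T. G t \<omega> * (Z t \<omega> - expectation (Z t))) \<ge> (\<Sum>t=n0..T. G t \<omega>) * \<delta> \<and> \<phi> \<omega> \<le> T}"
    unfolding deviation_event_def G_def
    by (auto simp: stopped_sum_as_gated_sum[of "\<phi> _" T] stopped_count_as_gated_sum[of "\<phi> _" T])
  also have "\<dots> \<in> events" by measurable
  finally show ?thesis .
qed

lemma exp_centred_shifted_mgf:
  assumes bounded: "\<And>\<omega>. \<omega> \<in> space M \<Longrightarrow> 0 \<le> Z t \<omega> \<and> Z t \<omega> \<le> Bd"
  shows "integrable M (\<lambda>\<omega>. exp (l * (Z t \<omega> - expectation (Z t)) - l\<^sup>2 * Bd\<^sup>2 / 8))"
    and "expectation (\<lambda>\<omega>. exp (l * (Z t \<omega> - expectation (Z t)) - l\<^sup>2 * Bd\<^sup>2 / 8)) \<le> 1"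
proof -
  interpret Zt: interval_bounded_random_variable M "Z t" 0 Bd
    by unfold_locales (use bounded in \<open>auto intro!: AE_I2\<close>)
  have split: "exp (l * (Z t \<omega> - expectation (Z t)) - l\<^sup>2 * Bd\<^sup>2 / 8)
      = exp (l * (Z t \<omega> - expectation (Z t))) * exp (- (l\<^sup>2 * Bd\<^sup>2 / 8))" for \<omega>
    by (simp flip: exp_add)
  show "integrable M (\<lambda>\<omega>. exp (l * (Z t \<omega> - expectation (Z t)) - l\<^sup>2 * Bd\<^sup>2 / 8))"
    unfolding split using Zt.integrable_exp_centred by simp
  have "expectation (\<lambda>\<omega>. exp (l * (Z t \<omega> - expectation (Z t))) * exp (- (l\<^sup>2 * Bd\<^sup>2 / 8)))
      \<le> exp (l\<^sup>2 * Bd\<^sup>2 / 8) * exp (- (l\<^sup>2 * Bd\<^sup>2 / 8))"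
    using Zt.Hoeffdings_lemma_expectation[of l] by (simp add: mult_right_mono)
  then show "expectation (\<lambda>\<omega>. exp (l * (Z t \<omega> - expectation (Z t)) - l\<^sup>2 * Bd\<^sup>2 / 8)) \<le> 1"
    unfolding split by (simp flip: exp_add)
qed

text \<open>One-sided maximal tail bound for the stopped deviation, in direction \<open>\<sigma> = \<plusminus>1\<close>: Markov's
  inequality applied to the exponential supermartingale stopped at \<open>\<phi>\<close>.\<close>
lemma deviation_event_tail:
  fixes b :: "int \<Rightarrow> 'a \<Rightarrow> real" and \<phi> :: "'a \<Rightarrow> int" and \<sigma> \<delta> Bd :: real
  assumes bounded: "\<And>t \<omega>. \<omega> \<in> space M \<Longrightarrow> 0 \<le> Z t \<omega> \<and> Z t \<omega> \<le> Bd"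
    and b_01: "\<And>t \<omega>. \<omega> \<in> space M \<Longrightarrow> b t \<omega> \<in> {0, 1}"
    and b_pred: "\<And>t. b t \<in> borel_measurable (nat_filt M Z (t - 1))"
    and stop: "stopping_time (nat_filt M Z) \<phi>"
    and \<phi>_cond: "\<And>\<omega>. \<omega> \<in> space M \<Longrightarrow> (\<Sum>t=n0..\<phi> \<omega>. b t \<omega>) \<ge> real s \<or> \<phi> \<omega> = T + 1"
    and \<delta>_pos: "\<delta> > 0" and \<sigma>: "\<bar>\<sigma>\<bar> = 1"
  shows "measure M (deviation_event \<sigma> b \<phi> n0 T \<delta>) \<le> exp (- 2 * real s * \<delta>\<^sup>2 / Bd\<^sup>2)"
proof (cases "Bd = 0")
  case True
  then show ?thesis by (simp add: prob_le_1)
next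
  case Bd: False
  define l where "l = \<sigma> * (4 * \<delta> / Bd\<^sup>2)"
  define c where "c = 2 * \<delta>\<^sup>2 / Bd\<^sup>2"
  have "\<sigma> * \<sigma> = 1" using \<sigma> abs_mult_self_eq[of \<sigma>] by simp
  then have c_eq: "l\<^sup>2 * Bd\<^sup>2 / 8 = c"
    using Bd by (simp add: l_def c_def field_simps power2_eq_square)
  define G where "G t \<omega> = (if t \<le> \<phi> \<omega> then b t \<omega> else 0)" for t \<omega>
  define g where "g t z = l * (z - expectation (Z t)) - c" for t z
  define W where "W \<omega> = exp (\<Sum>t=n0..T. G t \<omega> * g t (Z t \<omega>))" for \<omega>
  define e where "e = exp (2 * real s * \<delta>\<^sup>2 / Bd\<^sup>2)"
  have W: "integrable M W \<and> expectation W \<le> 1"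
    unfolding W_def
  proof (rule gated_exp_sum_expectation_le_1)
    show "G t \<omega> \<in> {0, 1}" if "\<omega> \<in> space M" for t \<omega>
      using b_01[OF that] by (simp add: G_def)
    show "G t \<in> borel_measurable (nat_filt M Z (t - 1))" for t
      unfolding G_def by (rule stopped_gate_predictable[OF stop b_pred])
    show "g t \<in> borel_measurable borel" for t
      unfolding g_def by measurable
  qed (use exp_centred_shifted_mgf[OF bounded, where l = l] in \<open>simp_all add: g_def c_eq\<close>)
  have [measurable]: "W \<in> borel_measurable M" using W by auto
  have "measure M {\<omega> \<in> space M. W \<omega> \<ge> e} \<le> expectation W / e"
    using W by (intro integral_Markov_inequality_measure[where A = "space M"]) (auto simp: e_def W_def[abs_def])
  also have "\<dots> \<le> exp (- 2 * real s * \<delta>\<^sup>2 / Bd\<^sup>2)"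
    using W by (simp add: e_def exp_minus divide_right_mono divide_inverse)
  finally have Markov: "measure M {\<omega> \<in> space M. W \<omega> \<ge> e} \<le> exp (- 2 * real s * \<delta>\<^sup>2 / Bd\<^sup>2)" .
  have "deviation_event \<sigma> b \<phi> n0 T \<delta> \<subseteq> {\<omega> \<in> space M. W \<omega> \<ge> e}"
  proof safe
    fix \<omega> assume "\<omega> \<in> deviation_event \<sigma> b \<phi> n0 T \<delta>"
    then have \<omega>: "\<omega> \<in> space M" "\<phi> \<omega> \<le> T"
      and dev: "\<sigma> * (\<Sum>t=n0..\<phi> \<omega>. b t \<omega> * (Z t \<omega> - expectation (Z t))) \<ge> (\<Sum>t=n0..\<phi> \<omega>. b t \<omega>) * \<delta>"
      by (auto simp: deviation_event_def)
    have "(\<Sum>t=n0..T. G t \<omega> * g t (Z t \<omega>))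
        = l * (\<Sum>t=n0..\<phi> \<omega>. b t \<omega> * (Z t \<omega> - expectation (Z t))) - c * (\<Sum>t=n0..\<phi> \<omega>. b t \<omega>)"
      unfolding stopped_sum_as_gated_sum[OF \<omega>(2)] stopped_count_as_gated_sum[OF \<omega>(2)]
      by (simp add: G_def g_def algebra_simps sum_subtractf sum_distrib_left sum.distrib)
    also have "\<dots> \<ge> 2 * real s * \<delta>\<^sup>2 / Bd\<^sup>2"
      unfolding l_def c_def
      by (rule deviation_exponent_lower_bound[OF dev _ \<delta>_pos Bd]) (use \<phi>_cond[OF \<omega>(1)] \<omega>(2) in auto)
    finally show "W \<omega> \<ge> e" by (simp add: W_def e_def)
  qed (simp add: deviation_event_def)
  then have "measure M (deviation_event \<sigma> b \<phi> n0 T \<delta>) \<le> measure M {\<omega> \<in> space M. W \<omega> \<ge> e}"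
    by (rule finite_measure_mono) measurable
  with Markov show ?thesis by linarith
qed

end

theorem lemma1:
  fixes M :: "'a measure" and Z :: "int \<Rightarrow> 'a \<Rightarrow> real" and Bd :: real
    and b :: "int \<Rightarrow> 'a \<Rightarrow> real" and s :: nat and n0 T :: int
    and \<phi> :: "'a \<Rightarrow> int" and \<delta> :: real
  assumes "prob_space M"
    and indep: "prob_space.indep_vars M (\<lambda>_. borel) Z UNIV"
    and bounded: "\<And>t \<omega>. \<omega> \<in> space M \<Longrightarrow> 0 \<le> Z t \<omega> \<and> Z t \<omega> \<le> Bd"
    and T_ge: "T \<ge> n0"
    and b_01: "\<And>t \<omega>. \<omega> \<in> space M \<Longrightarrow> b t \<omega> \<in> {0, 1}"
    and b_pred: "\<And>t. b t \<in> borel_measurable (nat_filt M Z (t - 1))"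
    and stop: "stopping_time (nat_filt M Z) \<phi>"
    and \<phi>_range: "\<And>\<omega>. \<omega> \<in> space M \<Longrightarrow> \<phi> \<omega> \<in> {n0..T+1}"
    and \<phi>_cond: "\<And>\<omega>. \<omega> \<in> space M \<Longrightarrow>
         (\<Sum>t=n0..\<phi> \<omega>. b t \<omega>) \<ge> real s \<or> \<phi> \<omega> = T + 1"
    and \<delta>_pos: "\<delta> > 0"
  shows "measure M {\<omega> \<in> space M.
            (\<Sum>t=n0..\<phi> \<omega>. b t \<omega> * (Z t \<omega> - prob_space.expectation M (Z t)))
              \<ge> (\<Sum>t=n0..\<phi> \<omega>. b t \<omega>) * \<delta> \<and> \<phi> \<omega> \<le> T}
           \<le> exp (- 2 * real s * \<delta>\<^sup>2 / Bd\<^sup>2)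
     \<and> measure M {\<omega> \<in> space M.
            \<bar>\<Sum>t=n0..\<phi> \<omega>. b t \<omega> * (Z t \<omega> - prob_space.expectation M (Z t))\<bar>
              \<ge> (\<Sum>t=n0..\<phi> \<omega>. b t \<omega>) * \<delta> \<and> \<phi> \<omega> \<le> T}
           \<le> 2 * exp (- 2 * real s * \<delta>\<^sup>2 / Bd\<^sup>2)"
proof -
  interpret indep_process M Z
    using assms(1) indep by (simp add: indep_process_def indep_process_axioms_def)
  let ?E = "\<lambda>\<sigma>. deviation_event \<sigma> b \<phi> n0 T \<delta>"
  have tail: "measure M (?E \<sigma>) \<le> exp (- 2 * real s * \<delta>\<^sup>2 / Bd\<^sup>2)" if "\<bar>\<sigma>\<bar> = 1" for \<sigma>
    using deviation_event_tail[OF bounded b_01 b_pred stop \<phi>_cond \<delta>_pos that] .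
  have upper: "{\<omega> \<in> space M. (\<Sum>t=n0..\<phi> \<omega>. b t \<omega> * (Z t \<omega> - expectation (Z t)))
      \<ge> (\<Sum>t=n0..\<phi> \<omega>. b t \<omega>) * \<delta> \<and> \<phi> \<omega> \<le> T} = ?E 1"
    by (simp add: deviation_event_def)
  have two_sided: "{\<omega> \<in> space M. \<bar>\<Sum>t=n0..\<phi> \<omega>. b t \<omega> * (Z t \<omega> - expectation (Z t))\<bar>
      \<ge> (\<Sum>t=n0..\<phi> \<omega>. b t \<omega>) * \<delta> \<and> \<phi> \<omega> \<le> T} = ?E 1 \<union> ?E (-1)"
    by (auto simp: deviation_event_def abs_if)
  have "measure M (?E 1 \<union> ?E (-1)) \<le> measure M (?E 1) + measure M (?E (-1))"
    using deviation_event_sets[OF stop b_pred] by (intro measure_Un_le)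
  then show ?thesis
    unfolding upper two_sided using tail[of 1] tail[of "-1"] by simp
qed

end
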